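(* The measure $E_2$ is not monogamous. Explicitly: let $\mathcal H^A=\mathbb C^3$, $\mathcal H^B=\mathbb C^4$, $\mathcal H^C=\mathbb C^2$, and let real numbers $a_0,a_1,a_2,a_0',a_1',a_2'\ge 0$ satisfy $a_0^2=a_0'^2\ge \tfrac12$, $a_0>a_1\ge a_2$, $a_0'>a_1'\ge a_2'$, $\sum_i a_i^2=\sum_i a_i'^2=1$, and $a_1'a_2\neq a_1a_2'$. Put $$|\psi_0\rangle^{AB}=a_0|0\rangle|0\rangle+a_1|1\rangle|1\rangle+a_2|2\rangle|2\rangle,\qquad |\psi_1\rangle^{AB}=a_0'|0\rangle|3\rangle+a_1'|1\rangle|2\rangle+a_2'|2\rangle|1\rangle,$$ $$|\Phi\rangle^{ABC}=\tfrac{1}{\sqrt2}\big(|\psi_0\rangle^{AB}|0\rangle^C+|\psi_1\rangle^{AB}|1\rangle^C\big),$$ and let $\rho^{AB}=\mathrm{tr}_C|\Phi\rangle\langle\Phi|$, $\rho^{AC}=\mathrm{tr}_B|\Phi\rangle\langle\Phi|$. Then $E_2(|\Phi\rangle^{A|BC})=E_2(\rho^{AB})=1-a_0^2$, while $E_2(\rho^{AC})>0$ (indeed $\rho^{AC}$ has a non-positive partial transpose).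
   Context: For a bipartite pure state $|\psi\rangle\in\mathcal H^{X}\otimes\mathcal H^{Y}$ with Schmidt decomposition $|\psi\rangle=\sum_{j=1}^r\lambda_j|e_j\rangle|f_j\rangle$, $\lambda_1\ge\lambda_2\ge\dots\ge\lambda_r>0$, the partial-norm of entanglement is $E_2(|\psi\rangle)=\sum_{i\ge2}\lambda_i^2=1-\lambda_1^2=1-\|\rho^X\|$, where $\rho^X=\mathrm{tr}_Y|\psi\rangle\langle\psi|$ and $\|\cdot\|$ is the operator norm. For a mixed bipartite state $\rho$, $E_2(\rho)=\min\sum_j p_jE_2(|\psi_j\rangle)$, the minimum over all pure-state decompositions $\rho=\sum_jp_j|\psi_j\rangle\langle\psi_j|$ (convex-roof extension). For a tripartite state, $E(A|BC)$ denotes the measure of the state with respect to the bipartition $A$ versus $BC$, and $E(AB)$, $E(AC)$ denote the measure of the reduced states $\rho^{AB}=\mathrm{tr}_C\rho^{ABC}$, $\rho^{AC}=\mathrm{tr}_B\rho^{ABC}$. A bipartite entanglement measure $E$ is called monogamous if for every tripartite state $\rho^{ABC}$ satisfying the disentangling condition $E(A|BC)=E(AB)$ one has $E(AC)=0$. *)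

theory Defs
  imports Complex_Main
begin

text \<open>A vector of C^d is a function nat => complex, only the entries with
index < d matter.
A bipartite pure state on C^m (x) C^n is a coefficient function psi :: nat => nat => complex,
psi i j being the coefficient of |i>|j>, i < m, j < n.
A bipartite operator on C^m (x) C^n is a function (nat*nat) => (nat*nat) => complex,
rho (i,j) (i',j') = <i j| rho |i' j'>.\<close>

definition vnorm2 :: "nat \<Rightarrow> (nat \<Rightarrow> complex) \<Rightarrow> real" where
  "vnorm2 d x = (\<Sum>i<d. (cmod (x i))\<^sup>2)"

definition mat_vec :: "nat \<Rightarrow> (nat \<Rightarrow> nat \<Rightarrow> complex) \<Rightarrow> (nat \<Rightarrow> complex) \<Rightarrow> (nat \<Rightarrow> complex)" where
  "mat_vec d M x = (\<lambda>i. \<Sum>k<d. M i k * x k)"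

definition op_norm :: "nat \<Rightarrow> (nat \<Rightarrow> nat \<Rightarrow> complex) \<Rightarrow> real" where
  "op_norm d M = Sup {sqrt (vnorm2 d (mat_vec d M x)) | x. vnorm2 d x = 1}"

definition reduced_X :: "nat \<Rightarrow> (nat \<Rightarrow> nat \<Rightarrow> complex) \<Rightarrow> (nat \<Rightarrow> nat \<Rightarrow> complex)" where
  "reduced_X n psi = (\<lambda>i i'. \<Sum>j<n. psi i j * cnj (psi i' j))"

definition unit_state :: "nat \<Rightarrow> nat \<Rightarrow> (nat \<Rightarrow> nat \<Rightarrow> complex) \<Rightarrow> bool" where
  "unit_state m n psi \<longleftrightarrow> (\<Sum>i<m. \<Sum>j<n. (cmod (psi i j))\<^sup>2) = 1"

definition E2_pure :: "nat \<Rightarrow> nat \<Rightarrow> (nat \<Rightarrow> nat \<Rightarrow> complex) \<Rightarrow> real" where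
  "E2_pure m n psi = 1 - op_norm m (reduced_X n psi)"

definition is_decomp :: "nat \<Rightarrow> nat \<Rightarrow> (nat \<times> nat \<Rightarrow> nat \<times> nat \<Rightarrow> complex)
     \<Rightarrow> nat \<Rightarrow> (nat \<Rightarrow> real) \<Rightarrow> (nat \<Rightarrow> nat \<Rightarrow> nat \<Rightarrow> complex) \<Rightarrow> bool" where
  "is_decomp m n rho k p psis \<longleftrightarrow>
     (\<forall>l<k. p l \<ge> 0 \<and> unit_state m n (psis l)) \<and> (\<Sum>l<k. p l) = 1 \<and>
     (\<forall>i<m. \<forall>j<n. \<forall>i'<m. \<forall>j'<n.
        rho (i,j) (i',j') = (\<Sum>l<k. complex_of_real (p l) * psis l i j * cnj (psis l i' j')))"

definition E2_mixed :: "nat \<Rightarrow> nat \<Rightarrow> (nat \<times> nat \<Rightarrow> nat \<times> nat \<Rightarrow> complex) \<Rightarrow> real" where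
  "E2_mixed m n rho = Inf {(\<Sum>l<k. p l * E2_pure m n (psis l)) | k p psis. is_decomp m n rho k p psis}"

text \<open>Tripartite pure state Phi a b c on C^dA (x) C^dB (x) C^dC.
Bipartition A|BC: the BC index is encoded as b * dC + c.\<close>
definition A_BC :: "nat \<Rightarrow> (nat \<Rightarrow> nat \<Rightarrow> nat \<Rightarrow> complex) \<Rightarrow> (nat \<Rightarrow> nat \<Rightarrow> complex)" where
  "A_BC dC Phi = (\<lambda>a j. Phi a (j div dC) (j mod dC))"

definition rho_AB :: "nat \<Rightarrow> (nat \<Rightarrow> nat \<Rightarrow> nat \<Rightarrow> complex) \<Rightarrow> (nat \<times> nat \<Rightarrow> nat \<times> nat \<Rightarrow> complex)" where
  "rho_AB dC Phi = (\<lambda>(a,b) (a',b'). \<Sum>c<dC. Phi a b c * cnj (Phi a' b' c))"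

definition rho_AC :: "nat \<Rightarrow> (nat \<Rightarrow> nat \<Rightarrow> nat \<Rightarrow> complex) \<Rightarrow> (nat \<times> nat \<Rightarrow> nat \<times> nat \<Rightarrow> complex)" where
  "rho_AC dB Phi = (\<lambda>(a,c) (a',c'). \<Sum>b<dB. Phi a b c * cnj (Phi a' b c'))"

definition partial_transpose :: "(nat \<times> nat \<Rightarrow> nat \<times> nat \<Rightarrow> complex) \<Rightarrow> (nat \<times> nat \<Rightarrow> nat \<times> nat \<Rightarrow> complex)" where
  "partial_transpose rho = (\<lambda>(i,j) (i',j'). rho (i,j') (i',j))"

definition psd_bip :: "nat \<Rightarrow> nat \<Rightarrow> (nat \<times> nat \<Rightarrow> nat \<times> nat \<Rightarrow> complex) \<Rightarrow> bool" where
  "psd_bip m n M \<longleftrightarrow> (\<forall>x :: nat \<times> nat \<Rightarrow> complex.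
     (let q = (\<Sum>u\<in>{..<m}\<times>{..<n}. \<Sum>v\<in>{..<m}\<times>{..<n}. cnj (x u) * M u v * x v)
      in q \<in> \<real> \<and> Re q \<ge> 0))"

definition psi0 :: "real \<Rightarrow> real \<Rightarrow> real \<Rightarrow> nat \<Rightarrow> nat \<Rightarrow> complex" where
  "psi0 a0 a1 a2 = (\<lambda>i j. if i = 0 \<and> j = 0 then complex_of_real a0
      else if i = 1 \<and> j = 1 then complex_of_real a1
      else if i = 2 \<and> j = 2 then complex_of_real a2 else 0)"

definition psi1 :: "real \<Rightarrow> real \<Rightarrow> real \<Rightarrow> nat \<Rightarrow> nat \<Rightarrow> complex" where
  "psi1 b0 b1 b2 = (\<lambda>i j. if i = 0 \<and> j = 3 then complex_of_real b0
      else if i = 1 \<and> j = 2 then complex_of_real b1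
      else if i = 2 \<and> j = 1 then complex_of_real b2 else 0)"

definition Phi_ex :: "real \<Rightarrow> real \<Rightarrow> real \<Rightarrow> real \<Rightarrow> real \<Rightarrow> real \<Rightarrow> nat \<Rightarrow> nat \<Rightarrow> nat \<Rightarrow> complex" where
  "Phi_ex a0 a1 a2 b0 b1 b2 = (\<lambda>a b c. complex_of_real (1 / sqrt 2) *
      (if c = 0 then psi0 a0 a1 a2 a b else if c = 1 then psi1 b0 b1 b2 a b else 0))"

end

theory Submission
  imports Defs "HOL-Analysis.Convex"
begin

text \<open>For the cut A|BC the reduced state of A is diagonal with entries
  \<open>a\<^sub>0\<^sup>2, (a\<^sub>1\<^sup>2 + b\<^sub>1\<^sup>2)/2, (a\<^sub>2\<^sup>2 + b\<^sub>2\<^sup>2)/2\<close>, the first being the largest. The state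
  \<open>\<rho>\<^sup>A\<^sup>B = (|\<psi>\<^sub>0\<rangle>\<langle>\<psi>\<^sub>0| + |\<psi>\<^sub>1\<rangle>\<langle>\<psi>\<^sub>1|)/2\<close> has orthonormal \<open>\<psi>\<^sub>0, \<psi>\<^sub>1\<close>, so every state of
  every decomposition of it lies in their span; as \<open>b\<^sub>0 = a\<^sub>0\<close>, each such state has
  \<open>E\<^sub>2 \<ge> 1 - a\<^sub>0\<^sup>2\<close>, with equality for \<open>\<psi>\<^sub>0, \<psi>\<^sub>1\<close> themselves.

  For \<open>\<rho>\<^sup>A\<^sup>C\<close> an explicit vector \<open>x\<close> gives \<open>\<langle>x|(\<rho>\<^sup>A\<^sup>C)\<^sup>\<Gamma>|x\<rangle> = -\<eta> < 0\<close>. For a pure state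
  \<open>\<psi>\<close> on \<open>\<complex>\<^sup>3 \<otimes> \<complex>\<^sup>2\<close> the same form is at least \<open>-C |m(\<psi>)|\<close>, where \<open>m(\<psi>)\<close> is a
  \<open>2 \<times> 2\<close> minor of the coefficient matrix, and \<open>|m(\<psi>)|\<^sup>2 \<le> E\<^sub>2(\<psi>)\<close> because \<open>1 - \<parallel>\<rho>\<^sup>A\<parallel>\<close> is
  at least the Gram determinant of the two columns (Lagrange identity). Averaging over a
  decomposition and Cauchy--Schwarz give \<open>E\<^sub>2(\<rho>\<^sup>A\<^sup>C) \<ge> \<eta>\<^sup>2 / C\<^sup>2 > 0\<close>.\<close>

section \<open>Inner products, quadratic forms and the operator norm\<close>

definition cinner :: "'u set \<Rightarrow> ('u \<Rightarrow> complex) \<Rightarrow> ('u \<Rightarrow> complex) \<Rightarrow> complex" where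
  "cinner S x y = (\<Sum>u\<in>S. cnj (x u) * y u)"

definition qform :: "'u set \<Rightarrow> ('u \<Rightarrow> 'u \<Rightarrow> complex) \<Rightarrow> ('u \<Rightarrow> complex) \<Rightarrow> complex" where
  "qform S M x = (\<Sum>u\<in>S. \<Sum>v\<in>S. cnj (x u) * M u v * x v)"

definition pure_state_op :: "(nat \<Rightarrow> nat \<Rightarrow> complex) \<Rightarrow> nat \<times> nat \<Rightarrow> nat \<times> nat \<Rightarrow> complex" where
  "pure_state_op \<psi> = (\<lambda>(i, j) (i', j'). \<psi> i j * cnj (\<psi> i' j'))"

definition mat_adj_vec :: "nat \<Rightarrow> (nat \<Rightarrow> nat \<Rightarrow> complex) \<Rightarrow> (nat \<Rightarrow> complex) \<Rightarrow> nat \<Rightarrow> complex" where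
  "mat_adj_vec m M x = (\<lambda>j. \<Sum>i<m. cnj (M i j) * x i)"

lemma psd_bip_iff_qform:
  "psd_bip m n M \<longleftrightarrow> (\<forall>x. qform ({..<m} \<times> {..<n}) M x \<in> \<real> \<and> Re (qform ({..<m} \<times> {..<n}) M x) \<ge> 0)"
  unfolding psd_bip_def qform_def Let_def ..

lemma sum_lessThan_2: "(\<Sum>i::nat<2. f i) = f 0 + f 1"
  by (simp add: eval_nat_numeral)

lemma sum_lessThan_3: "(\<Sum>i::nat<3. f i) = f 0 + f 1 + f 2"
  by (simp add: eval_nat_numeral)

lemma sum_lessThan_4: "(\<Sum>i::nat<4. f i) = f 0 + f 1 + f 2 + f 3"
  by (simp add: eval_nat_numeral)

lemma sum_lessThan_8: "(\<Sum>i::nat<8. f i) = f 0 + f 1 + f 2 + f 3 + f 4 + f 5 + f 6 + f 7"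
  by (simp add: eval_nat_numeral)

lemma sum_lessThan_times: "(\<Sum>u\<in>{..<m::nat} \<times> {..<n::nat}. F u) = (\<Sum>i<m. \<Sum>j<n. F (i, j))"
  by (simp add: sum.cartesian_product)

lemma less_3_cases: "(i::nat) < 3 \<Longrightarrow> i = 0 \<or> i = 1 \<or> i = 2"
  by auto

lemma Re_mult_cnj_self: "Re (z * cnj z) = (cmod z)\<^sup>2"
  by (metis Re_complex_of_real complex_norm_square)

lemma cmod_add_sq: "(cmod (a + b))\<^sup>2 = (cmod a)\<^sup>2 + (cmod b)\<^sup>2 + 2 * Re (cnj a * b)"
proof -
  have "(a + b) * cnj (a + b) = a * cnj a + b * cnj b + (cnj a * b + cnj (cnj a * b))"
    by (simp add: algebra_simps)
  thus ?thesis
    by (simp only: Re_mult_cnj_self[symmetric] plus_complex.sel complex_add_cnj Re_complex_of_real)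
qed

lemma cmod_add_mult_sq_le:
  "(cmod (p * x + q * y))\<^sup>2 \<le> ((cmod p)\<^sup>2 + (cmod q)\<^sup>2) * ((cmod x)\<^sup>2 + (cmod y)\<^sup>2)"
proof -
  have "cmod (p * x + q * y) \<le> cmod p * cmod x + cmod q * cmod y"
    by (metis norm_mult norm_triangle_ineq)
  hence "(cmod (p * x + q * y))\<^sup>2 \<le> (cmod p * cmod x + cmod q * cmod y)\<^sup>2"
    by (simp add: power_mono)
  also have "\<dots> \<le> ((cmod p)\<^sup>2 + (cmod q)\<^sup>2) * ((cmod x)\<^sup>2 + (cmod y)\<^sup>2)"
    using zero_le_power2[of "cmod p * cmod y - cmod q * cmod x"]
    by (simp add: power2_eq_square algebra_simps)
  finally show ?thesis .
qed

lemma Re_det2_form_ge: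
  fixes A00 A01 A10 A11 :: complex
  shows "Re (A00 * cnj A00 + A11 * cnj A11 + A01 * cnj A10 + A10 * cnj A01)
    \<ge> - 2 * cmod (A00 * A11 - A01 * A10)"
proof -
  have "Re (A10 * cnj A01) = Re (A01 * cnj A10)" by simp
  hence "Re (A00 * cnj A00 + A11 * cnj A11 + A01 * cnj A10 + A10 * cnj A01)
      = (cmod A00)\<^sup>2 + (cmod A11)\<^sup>2 + 2 * Re (A01 * cnj A10)"
    by (simp only: plus_complex.sel Re_mult_cnj_self)
  moreover have "Re (A01 * cnj A10) \<ge> - (cmod A01 * cmod A10)"
    using abs_Re_le_cmod[of "A01 * cnj A10"] by (simp add: norm_mult)
  moreover have "2 * cmod A00 * cmod A11 \<le> (cmod A00)\<^sup>2 + (cmod A11)\<^sup>2"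
    using sum_squares_bound[of "cmod A00" "cmod A11"] by simp
  moreover have "cmod (A01 * A10) \<le> cmod (A00 * A11) + cmod (A00 * A11 - A01 * A10)"
    by (metis add.commute diff_diff_eq2 norm_triangle_ineq4 add_diff_cancel_left')
  ultimately show ?thesis by (simp add: norm_mult)
qed

lemma cinner_swap: "cinner S y x = cnj (cinner S x y)"
  unfolding cinner_def by (simp add: mult.commute)

lemma cinner_mult_right: "cinner S x (\<lambda>u. a * y u) = a * cinner S x y"
  unfolding cinner_def by (simp add: sum_distrib_left mult_ac)

lemma cinner_self_eq_0_iff:
  assumes "finite S"
  shows "cinner S w w = 0 \<longleftrightarrow> (\<forall>u\<in>S. w u = 0)"
proof -
  have "cinner S w w = complex_of_real (\<Sum>u\<in>S. (cmod (w u))\<^sup>2)"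
    unfolding cinner_def of_real_sum by (intro sum.cong refl) (metis complex_norm_square mult.commute)
  hence "cinner S w w = 0 \<longleftrightarrow> (\<Sum>u\<in>S. (cmod (w u))\<^sup>2) = 0" by (simp only: of_real_eq_0_iff)
  also have "\<dots> \<longleftrightarrow> (\<forall>u\<in>S. w u = 0)" using assms by (simp add: sum_nonneg_eq_0_iff)
  finally show ?thesis .
qed

lemma cmod_cinner_sq_le:
  "(cmod (cinner I x w))\<^sup>2 \<le> (\<Sum>i\<in>I. (cmod (x i))\<^sup>2) * (\<Sum>i\<in>I. (cmod (w i))\<^sup>2)"
proof -
  have "cmod (cinner I x w) \<le> (\<Sum>i\<in>I. cmod (x i) * cmod (w i))"
    unfolding cinner_def by (rule order_trans[OF norm_sum]) (simp add: norm_mult)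
  hence "(cmod (cinner I x w))\<^sup>2 \<le> (\<Sum>i\<in>I. cmod (x i) * cmod (w i))\<^sup>2"
    by (simp add: power_mono)
  also have "\<dots> \<le> (\<Sum>i\<in>I. (cmod (x i))\<^sup>2) * (\<Sum>i\<in>I. (cmod (w i))\<^sup>2)"
    by (rule Cauchy_Schwarz_ineq_sum)
  finally show ?thesis .
qed

lemma vnorm2_nonneg: "vnorm2 d x \<ge> 0"
  unfolding vnorm2_def by (simp add: sum_nonneg)

lemma of_real_vnorm2: "complex_of_real (vnorm2 d x) = cinner {..<d} x x"
  unfolding vnorm2_def cinner_def of_real_sum
  by (rule sum.cong) (simp, metis complex_norm_square mult.commute)

lemma mat_vec_reduced_X: "mat_vec m (reduced_X n M) x = mat_vec n M (mat_adj_vec m M x)"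
  unfolding mat_vec_def reduced_X_def mat_adj_vec_def
  by (rule ext) (simp add: sum_distrib_left sum_distrib_right mult.assoc sum.swap[of _ "{..<m}"])

lemma vnorm2_mat_adj_vec:
  "complex_of_real (vnorm2 n (mat_adj_vec m M x)) = cinner {..<m} x (mat_vec n M (mat_adj_vec m M x))"
proof -
  let ?y = "mat_adj_vec m M x"
  have "complex_of_real (vnorm2 n ?y) = (\<Sum>j<n. cnj (?y j) * ?y j)"
    by (simp add: of_real_vnorm2 cinner_def)
  also have "\<dots> = (\<Sum>j<n. \<Sum>i<m. M i j * cnj (x i) * ?y j)"
    unfolding mat_adj_vec_def by (simp add: sum_distrib_right)
  also have "\<dots> = (\<Sum>i<m. \<Sum>j<n. M i j * cnj (x i) * ?y j)" by (rule sum.swap)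
  also have "\<dots> = cinner {..<m} x (mat_vec n M ?y)"
    unfolding mat_vec_def cinner_def by (simp add: sum_distrib_left mult_ac)
  finally show ?thesis .
qed

text \<open>With \<open>y = M\<^sup>\<dagger> x\<close> one has \<open>\<parallel>y\<parallel>\<^sup>2 = \<langle>x, M y\<rangle>\<close>, so Cauchy--Schwarz and the hypothesis
  give \<open>\<parallel>y\<parallel>\<^sup>2 \<le> c \<parallel>x\<parallel>\<^sup>2\<close>, hence \<open>\<parallel>M y\<parallel>\<^sup>2 \<le> c\<^sup>2 \<parallel>x\<parallel>\<^sup>2\<close>.\<close>

lemma vnorm2_reduced_X_le:
  assumes c: "c \<ge> 0" and M: "\<And>y. vnorm2 m (mat_vec n M y) \<le> c * vnorm2 n y"
  shows "vnorm2 m (mat_vec m (reduced_X n M) x) \<le> c\<^sup>2 * vnorm2 m x"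
proof -
  define y where "y = mat_adj_vec m M x"
  define X where "X = vnorm2 m x"
  define Y where "Y = vnorm2 n y"
  define W where "W = vnorm2 m (mat_vec n M y)"
  have nonneg: "X \<ge> 0" "Y \<ge> 0" unfolding X_def Y_def by (simp_all add: vnorm2_nonneg)
  have W: "W \<le> c * Y" unfolding W_def Y_def by (rule M)
  have "Y\<^sup>2 = (cmod (cinner {..<m} x (mat_vec n M y)))\<^sup>2"
    using vnorm2_mat_adj_vec[of n m M x] nonneg(2)
    unfolding Y_def y_def by (metis abs_of_nonneg norm_of_real)
  also have "\<dots> \<le> X * W"
    unfolding X_def W_def vnorm2_def by (rule cmod_cinner_sq_le)
  also have "\<dots> \<le> X * (c * Y)" using W nonneg by (simp add: mult_left_mono)
  finally have "Y\<^sup>2 \<le> X * c * Y" by simp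
  hence Y: "Y \<le> c * X"
    using nonneg c by (cases "Y = 0") (auto simp: power2_eq_square mult_ac)
  have "W \<le> c * (c * X)" using W Y c by (meson mult_left_mono order_trans)
  thus ?thesis
    unfolding W_def y_def X_def by (simp add: mat_vec_reduced_X power2_eq_square mult_ac)
qed

lemma vnorm2_unit_vec:
  assumes "m > 0"
  shows "vnorm2 m (\<lambda>i. if i = 0 then 1 else 0) = 1"
  unfolding vnorm2_def using assms
  by (simp add: if_distrib[of "\<lambda>z. (cmod z)\<^sup>2"] sum.If_cases lessThan_def)

lemma op_norm_le:
  assumes "m > 0" "s \<ge> 0"
    and bound: "\<And>x. vnorm2 m x = 1 \<Longrightarrow> vnorm2 m (mat_vec m M x) \<le> s\<^sup>2"
  shows "op_norm m M \<le> s"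
  unfolding op_norm_def
proof (rule cSup_least)
  show "{sqrt (vnorm2 m (mat_vec m M x)) |x. vnorm2 m x = 1} \<noteq> {}"
    using vnorm2_unit_vec[OF \<open>m > 0\<close>] by blast
next
  fix r assume "r \<in> {sqrt (vnorm2 m (mat_vec m M x)) |x. vnorm2 m x = 1}"
  then obtain x where "vnorm2 m x = 1" "r = sqrt (vnorm2 m (mat_vec m M x))" by blast
  with bound[of x] \<open>s \<ge> 0\<close> show "r \<le> s" by (metis real_sqrt_abs real_sqrt_le_mono abs_of_nonneg)
qed

lemma op_norm_diag:
  assumes "m > 0"
    and M: "\<And>i k. i < m \<Longrightarrow> k < m \<Longrightarrow> M i k = (if i = k then complex_of_real (t i) else 0)"
    and t: "\<And>i. i < m \<Longrightarrow> 0 \<le> t i \<and> t i \<le> t 0"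
  shows "op_norm m M = t 0"
proof -
  have t0: "t 0 \<ge> 0" using t[of 0] \<open>m > 0\<close> by simp
  have Mx: "mat_vec m M x i = complex_of_real (t i) * x i" if "i < m" for x i
  proof -
    have "mat_vec m M x i = (\<Sum>k<m. if k = i then complex_of_real (t i) * x k else 0)"
      unfolding mat_vec_def using M that by (intro sum.cong) auto
    also have "\<dots> = complex_of_real (t i) * x i" using that by (simp add: sum.delta)
    finally show ?thesis .
  qed
  have bound: "vnorm2 m (mat_vec m M x) \<le> (t 0)\<^sup>2 * vnorm2 m x" for x
  proof -
    have "vnorm2 m (mat_vec m M x) = (\<Sum>i<m. (t i)\<^sup>2 * (cmod (x i))\<^sup>2)"
      unfolding vnorm2_def using Mx t by (intro sum.cong) (auto simp: norm_mult power_mult_distrib)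
    also have "\<dots> \<le> (\<Sum>i<m. (t 0)\<^sup>2 * (cmod (x i))\<^sup>2)"
      using t by (intro sum_mono mult_right_mono power_mono) auto
    finally show ?thesis unfolding vnorm2_def by (simp add: sum_distrib_left)
  qed
  have le: "op_norm m M \<le> t 0"
    using \<open>m > 0\<close> t0 by (rule op_norm_le) (metis bound mult.right_neutral)
  let ?e = "\<lambda>i. if i = 0 then (1::complex) else 0"
  have "vnorm2 m (mat_vec m M ?e) = (\<Sum>i<m. if i = 0 then (t 0)\<^sup>2 else 0)"
    unfolding vnorm2_def using Mx by (intro sum.cong) auto
  also have "\<dots> = (t 0)\<^sup>2" using \<open>m > 0\<close> by (simp add: sum.delta)
  finally have e: "sqrt (vnorm2 m (mat_vec m M ?e)) = t 0" using t0 by simp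
  have "t 0 \<le> op_norm m M" unfolding op_norm_def
  proof (rule cSup_upper)
    show "t 0 \<in> {sqrt (vnorm2 m (mat_vec m M x)) |x. vnorm2 m x = 1}"
      using e vnorm2_unit_vec[OF \<open>m > 0\<close>] by force
    show "bdd_above {sqrt (vnorm2 m (mat_vec m M x)) |x. vnorm2 m x = 1}"
    proof (rule bdd_aboveI)
      fix r assume "r \<in> {sqrt (vnorm2 m (mat_vec m M x)) |x. vnorm2 m x = 1}"
      then obtain x where "vnorm2 m x = 1" "r = sqrt (vnorm2 m (mat_vec m M x))" by blast
      with bound[of x] t0 show "r \<le> t 0"
        by (metis mult.right_neutral real_sqrt_abs real_sqrt_le_mono abs_of_nonneg)
    qed
  qed
  with le show ?thesis by simp
qed

section \<open>Bounds for the partial-norm of entanglement of pure states\<close>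

lemma E2_pure_ge:
  assumes "m > 0" "c \<ge> 0" and bound: "\<And>y. vnorm2 m (mat_vec n \<psi> y) \<le> c * vnorm2 n y"
  shows "E2_pure m n \<psi> \<ge> 1 - c"
proof -
  have "op_norm m (reduced_X n \<psi>) \<le> c"
  proof (rule op_norm_le)
    fix x :: "nat \<Rightarrow> complex" assume "vnorm2 m x = 1"
    thus "vnorm2 m (mat_vec m (reduced_X n \<psi>) x) \<le> c\<^sup>2"
      using vnorm2_reduced_X_le[OF \<open>c \<ge> 0\<close> bound, of x] by simp
  qed (use assms in auto)
  thus ?thesis unfolding E2_pure_def by simp
qed

lemma E2_pure_nonneg:
  assumes "m > 0" "unit_state m n \<psi>"
  shows "E2_pure m n \<psi> \<ge> 0"
proof -
  have "vnorm2 m (mat_vec n \<psi> y) \<le> 1 * vnorm2 n y" for y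
  proof -
    have "vnorm2 m (mat_vec n \<psi> y) = (\<Sum>i<m. (cmod (cinner {..<n} (\<lambda>j. cnj (\<psi> i j)) y))\<^sup>2)"
      unfolding vnorm2_def mat_vec_def cinner_def by simp
    also have "\<dots> \<le> (\<Sum>i<m. (\<Sum>j<n. (cmod (\<psi> i j))\<^sup>2) * vnorm2 n y)"
    proof (rule sum_mono)
      fix i
      show "(cmod (cinner {..<n} (\<lambda>j. cnj (\<psi> i j)) y))\<^sup>2 \<le> (\<Sum>j<n. (cmod (\<psi> i j))\<^sup>2) * vnorm2 n y"
        using cmod_cinner_sq_le[of "{..<n}" "\<lambda>j. cnj (\<psi> i j)" y] by (simp add: vnorm2_def)
    qed
    also have "\<dots> = 1 * vnorm2 n y"
      using assms(2) unfolding unit_state_def by (simp add: sum_distrib_right[symmetric])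
    finally show ?thesis .
  qed
  thus ?thesis using E2_pure_ge[OF \<open>m > 0\<close>, of 1] by simp
qed

lemma E2_pure_eq_of_diagonal:
  assumes "m > 0"
    and "\<And>i k. i < m \<Longrightarrow> k < m \<Longrightarrow> reduced_X n \<psi> i k = (if i = k then complex_of_real (t i) else 0)"
    and "\<And>i. i < m \<Longrightarrow> 0 \<le> t i \<and> t i \<le> t 0"
  shows "E2_pure m n \<psi> = 1 - t 0"
  unfolding E2_pure_def using op_norm_diag[OF assms] by simp

lemma quadratic_form_ge_cross_term:
  fixes A C s p q :: real
  assumes "A \<ge> 0" "C \<ge> 0" "s\<^sup>2 \<le> A * C" "p \<ge> 0" "q \<ge> 0"
  shows "2 * s * p * q \<le> A * p\<^sup>2 + C * q\<^sup>2"
proof -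
  have "2 * s * p * q \<le> 2 * sqrt (A * C) * p * q"
    using assms by (intro mult_right_mono) (auto intro: real_le_rsqrt)
  also have "\<dots> = 2 * (sqrt A * p) * (sqrt C * q)" by (simp add: real_sqrt_mult)
  also have "\<dots> \<le> (sqrt A * p)\<^sup>2 + (sqrt C * q)\<^sup>2" by (rule sum_squares_bound)
  also have "\<dots> = A * p\<^sup>2 + C * q\<^sup>2" using assms by (simp add: power_mult_distrib)
  finally show ?thesis .
qed

text \<open>The Gram matrix \<open>G\<close> of the two columns \<open>u, v\<close> has trace 1 and eigenvalues in \<open>[0, 1]\<close>,
  so \<open>\<lambda>\<^sub>m\<^sub>i\<^sub>n \<ge> \<lambda>\<^sub>m\<^sub>i\<^sub>n \<lambda>\<^sub>m\<^sub>a\<^sub>x = det G\<close> and \<open>\<lambda>\<^sub>m\<^sub>a\<^sub>x \<le> 1 - det G\<close>. The proof checks directly that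
  \<open>(1 - det G) I - G\<close> is positive semidefinite.\<close>

lemma vnorm2_two_columns_le:
  fixes u v :: "nat \<Rightarrow> complex" and m :: nat
  defines "N0 \<equiv> \<Sum>i<m. (cmod (u i))\<^sup>2" and "N1 \<equiv> \<Sum>i<m. (cmod (v i))\<^sup>2"
    and "n \<equiv> \<Sum>i<m. cnj (u i) * v i"
  assumes trace: "N0 + N1 = 1"
  shows "(\<Sum>i<m. (cmod (u i * y0 + v i * y1))\<^sup>2)
     \<le> (1 - (N0 * N1 - (cmod n)\<^sup>2)) * ((cmod y0)\<^sup>2 + (cmod y1)\<^sup>2)"
proof -
  define d where "d = N0 * N1 - (cmod n)\<^sup>2"
  have expand: "(\<Sum>i<m. (cmod (u i * y0 + v i * y1))\<^sup>2)
      = N0 * (cmod y0)\<^sup>2 + N1 * (cmod y1)\<^sup>2 + 2 * Re (cnj y0 * y1 * n)"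
    unfolding cmod_add_sq N0_def N1_def n_def
    by (simp add: sum.distrib sum_distrib_left sum_distrib_right norm_mult power_mult_distrib
        Re_sum[symmetric] mult_ac)
  have "Re (cnj y0 * y1 * n) \<le> cmod n * cmod y0 * cmod y1"
    using complex_Re_le_cmod[of "cnj y0 * y1 * n"] by (simp add: norm_mult mult_ac)
  moreover have "2 * cmod n * cmod y0 * cmod y1 \<le> (N1 - d) * (cmod y0)\<^sup>2 + (N0 - d) * (cmod y1)\<^sup>2"
  proof (rule quadratic_form_ge_cross_term)
    have N0: "N0 = 1 - N1" using trace by simp
    have "N1 - d = N1\<^sup>2 + (cmod n)\<^sup>2" "N0 - d = N0\<^sup>2 + (cmod n)\<^sup>2"
      "(N1 - d) * (N0 - d) = (cmod n)\<^sup>2 + d\<^sup>2"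
      unfolding d_def N0 by (simp_all add: algebra_simps power2_eq_square)
    thus "N1 - d \<ge> 0" "N0 - d \<ge> 0" "(cmod n)\<^sup>2 \<le> (N1 - d) * (N0 - d)" by simp_all
  qed simp_all
  ultimately have cross: "2 * Re (cnj y0 * y1 * n) \<le> (N1 - d) * (cmod y0)\<^sup>2 + (N0 - d) * (cmod y1)\<^sup>2"
    by linarith
  have "(\<Sum>i<m. (cmod (u i * y0 + v i * y1))\<^sup>2)
      \<le> N0 * (cmod y0)\<^sup>2 + N1 * (cmod y1)\<^sup>2 + ((N1 - d) * (cmod y0)\<^sup>2 + (N0 - d) * (cmod y1)\<^sup>2)"
    unfolding expand using cross by linarith
  also have "\<dots> = (N0 + N1 - d) * ((cmod y0)\<^sup>2 + (cmod y1)\<^sup>2)" by (simp add: algebra_simps)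
  finally show ?thesis unfolding trace d_def .
qed

lemma E2_pure_ge_gram_det:
  assumes "m > 0" "unit_state m 2 \<psi>"
  shows "(\<Sum>i<m. (cmod (\<psi> i 0))\<^sup>2) * (\<Sum>i<m. (cmod (\<psi> i 1))\<^sup>2)
      - (cmod (\<Sum>i<m. cnj (\<psi> i 0) * \<psi> i 1))\<^sup>2 \<le> E2_pure m 2 \<psi>"
    (is "?N0 * ?N1 - (cmod ?n)\<^sup>2 \<le> _")
proof -
  have trace: "?N0 + ?N1 = 1"
    using assms(2) unfolding unit_state_def by (simp add: sum.swap[of _ "{..<m}"] numeral_2_eq_2 sum.distrib)
  have "?N0 * ?N1 - (cmod ?n)\<^sup>2 \<le> ?N0 * ?N1" by simp
  also have "\<dots> \<le> 1" using trace by (smt (verit) mult_left_le_one_le sum_nonneg zero_le_power2)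
  finally have "1 - (?N0 * ?N1 - (cmod ?n)\<^sup>2) \<ge> 0" by simp
  moreover have "vnorm2 m (mat_vec 2 \<psi> y) \<le> (1 - (?N0 * ?N1 - (cmod ?n)\<^sup>2)) * vnorm2 2 y" for y
    using vnorm2_two_columns_le[of "\<lambda>i. \<psi> i 0" m "\<lambda>i. \<psi> i 1" "y 0" "y 1"] trace
    by (simp add: vnorm2_def mat_vec_def numeral_2_eq_2)
  ultimately show ?thesis using E2_pure_ge[OF \<open>m > 0\<close>] by fastforce
qed

definition minor12 :: "(nat \<Rightarrow> nat \<Rightarrow> complex) \<Rightarrow> complex" where
  "minor12 \<psi> = \<psi> 1 0 * \<psi> 2 1 - \<psi> 1 1 * \<psi> 2 0"

lemma lagrange_identity3:
  fixes u0 u1 u2 v0 v1 v2 :: complex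
  shows "((cmod u0)\<^sup>2 + (cmod u1)\<^sup>2 + (cmod u2)\<^sup>2) * ((cmod v0)\<^sup>2 + (cmod v1)\<^sup>2 + (cmod v2)\<^sup>2)
     - (cmod (cnj u0 * v0 + cnj u1 * v1 + cnj u2 * v2))\<^sup>2
   = (cmod (u0 * v1 - u1 * v0))\<^sup>2 + (cmod (u0 * v2 - u2 * v0))\<^sup>2 + (cmod (u1 * v2 - u2 * v1))\<^sup>2"
proof -
  have "complex_of_real (((cmod u0)\<^sup>2 + (cmod u1)\<^sup>2 + (cmod u2)\<^sup>2) * ((cmod v0)\<^sup>2 + (cmod v1)\<^sup>2 + (cmod v2)\<^sup>2)
       - (cmod (cnj u0 * v0 + cnj u1 * v1 + cnj u2 * v2))\<^sup>2)
    = complex_of_real ((cmod (u0 * v1 - u1 * v0))\<^sup>2 + (cmod (u0 * v2 - u2 * v0))\<^sup>2 + (cmod (u1 * v2 - u2 * v1))\<^sup>2)"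
    unfolding of_real_add of_real_mult of_real_diff complex_norm_square
      complex_cnj_add complex_cnj_mult complex_cnj_diff complex_cnj_cnj
    by algebra
  thus ?thesis using of_real_eq_iff by blast
qed

lemma E2_pure_ge_minor12:
  assumes "unit_state 3 2 \<psi>"
  shows "(cmod (minor12 \<psi>))\<^sup>2 \<le> E2_pure 3 2 \<psi>"
proof -
  have "(cmod (minor12 \<psi>))\<^sup>2
      \<le> (\<Sum>i<3. (cmod (\<psi> i 0))\<^sup>2) * (\<Sum>i<3. (cmod (\<psi> i 1))\<^sup>2) - (cmod (\<Sum>i<3. cnj (\<psi> i 0) * \<psi> i 1))\<^sup>2"
    unfolding sum_lessThan_3
    using lagrange_identity3[of "\<psi> 0 0" "\<psi> 1 0" "\<psi> 2 0" "\<psi> 0 1" "\<psi> 1 1" "\<psi> 2 1"]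
    by (simp add: minor12_def mult.commute)
  also have "\<dots> \<le> E2_pure 3 2 \<psi>" using E2_pure_ge_gram_det[OF _ assms] by simp
  finally show ?thesis .
qed

section \<open>Decompositions of mixed states\<close>

lemma qform_mixture:
  fixes f :: "nat \<Rightarrow> 'u \<Rightarrow> complex"
  shows "qform S (\<lambda>u v. \<Sum>l\<in>L. complex_of_real (p l) * f l u * cnj (f l v)) w
       = (\<Sum>l\<in>L. complex_of_real (p l * (cmod (cinner S w (f l)))\<^sup>2))"
proof -
  have entry: "cnj (w u) * (\<Sum>l\<in>L. complex_of_real (p l) * f l u * cnj (f l v)) * w v
      = (\<Sum>l\<in>L. complex_of_real (p l) * (cnj (w u) * f l u) * cnj (cnj (w v) * f l v))" for u v
    by (simp add: sum_distrib_left sum_distrib_right mult_ac)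
  have "qform S (\<lambda>u v. \<Sum>l\<in>L. complex_of_real (p l) * f l u * cnj (f l v)) w
      = (\<Sum>u\<in>S. \<Sum>v\<in>S. \<Sum>l\<in>L. complex_of_real (p l) * (cnj (w u) * f l u) * cnj (cnj (w v) * f l v))"
    unfolding qform_def entry ..
  also have "\<dots> = (\<Sum>u\<in>S. \<Sum>l\<in>L. \<Sum>v\<in>S. complex_of_real (p l) * (cnj (w u) * f l u) * cnj (cnj (w v) * f l v))"
    by (rule sum.cong[OF refl], rule sum.swap)
  also have "\<dots> = (\<Sum>l\<in>L. \<Sum>u\<in>S. \<Sum>v\<in>S. complex_of_real (p l) * (cnj (w u) * f l u) * cnj (cnj (w v) * f l v))"
    by (rule sum.swap)
  also have "\<dots> = (\<Sum>l\<in>L. complex_of_real (p l) * cinner S w (f l) * cnj (cinner S w (f l)))"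
    unfolding cinner_def by (simp add: sum_distrib_left sum_distrib_right mult_ac)
  also have "\<dots> = (\<Sum>l\<in>L. complex_of_real (p l * (cmod (cinner S w (f l)))\<^sup>2))"
    by (simp only: of_real_mult complex_norm_square mult.assoc)
  finally show ?thesis .
qed

text \<open>A vector orthogonal to every vector \<open>g\<^sub>c\<close> of one decomposition is annihilated by the
  density operator, hence (by positivity of the weights) orthogonal to every state of any other
  decomposition.\<close>

lemma cinner_eq_0_of_decomp:
  fixes f g :: "nat \<Rightarrow> 'u \<Rightarrow> complex"
  assumes eq: "\<And>u v. u \<in> S \<Longrightarrow> v \<in> S \<Longrightarrow>
      (\<Sum>l<k. complex_of_real (p l) * f l u * cnj (f l v)) = (\<Sum>c<r. g c u * cnj (g c v))"
    and p: "\<And>l. l < k \<Longrightarrow> p l \<ge> 0"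
    and orth: "\<And>c. c < r \<Longrightarrow> cinner S w (g c) = 0"
    and l: "l < k" "p l > 0"
  shows "cinner S w (f l) = 0"
proof -
  have "complex_of_real (\<Sum>l<k. p l * (cmod (cinner S w (f l)))\<^sup>2)
      = qform S (\<lambda>u v. \<Sum>l<k. complex_of_real (p l) * f l u * cnj (f l v)) w"
    unfolding of_real_sum qform_mixture ..
  also have "\<dots> = qform S (\<lambda>u v. \<Sum>c<r. complex_of_real 1 * g c u * cnj (g c v)) w"
    unfolding qform_def using eq by (intro sum.cong refl) simp
  also have "\<dots> = 0" unfolding qform_mixture using orth by simp
  finally have "(\<Sum>l<k. p l * (cmod (cinner S w (f l)))\<^sup>2) = 0" by (simp only: of_real_eq_0_iff)
  hence "\<forall>l\<in>{..<k}. p l * (cmod (cinner S w (f l)))\<^sup>2 = 0"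
    by (subst (asm) sum_nonneg_eq_0_iff) (auto simp: p)
  hence "p l * (cmod (cinner S w (f l)))\<^sup>2 = 0" using l(1) by blast
  with l(2) show ?thesis by simp
qed

lemma eq_on_span_of_orthonormal:
  assumes "finite S"
    and norm: "cinner S P0 P0 = 1" "cinner S P1 P1 = 1" "cinner S P0 P1 = 0"
    and orth: "\<And>w. cinner S w P0 = 0 \<Longrightarrow> cinner S w P1 = 0 \<Longrightarrow> cinner S w f = 0"
  shows "\<forall>u\<in>S. f u = cinner S P0 f * P0 u + cinner S P1 f * P1 u"
proof -
  define \<alpha> where "\<alpha> = cinner S P0 f"
  define \<beta> where "\<beta> = cinner S P1 f"
  define w where "w u = f u - \<alpha> * P0 u - \<beta> * P1 u" for u
  have lin: "cinner S w x = cinner S f x - cnj \<alpha> * cinner S P0 x - cnj \<beta> * cinner S P1 x" for x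
    unfolding w_def cinner_def by (simp add: sum_subtractf sum.distrib sum_distrib_left algebra_simps)
  have "cinner S P1 P0 = 0" using cinner_swap[of S P1 P0] norm(3) by simp
  hence w0: "cinner S w P0 = 0" and w1: "cinner S w P1 = 0"
    unfolding lin using norm by (simp_all add: cinner_swap[of S f] \<alpha>_def \<beta>_def)
  have lin2: "cinner S x w = cinner S x f - \<alpha> * cinner S x P0 - \<beta> * cinner S x P1" for x
    unfolding w_def cinner_def by (simp add: sum_subtractf sum.distrib sum_distrib_left algebra_simps)
  have "cinner S w w = cinner S w f - \<alpha> * cinner S w P0 - \<beta> * cinner S w P1" by (rule lin2)
  also have "\<dots> = 0" using orth[OF w0 w1] w0 w1 by simp
  finally show ?thesis using \<open>finite S\<close> by (simp add: cinner_self_eq_0_iff w_def \<alpha>_def \<beta>_def diff_eq_eq)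
qed

lemma is_decomp_normalize:
  fixes v :: "nat \<Rightarrow> nat \<Rightarrow> nat \<Rightarrow> complex" and q :: "nat \<Rightarrow> real"
  assumes q: "\<And>b. q b = (\<Sum>i<m. \<Sum>j<n. (cmod (v b i j))\<^sup>2)"
    and pos: "\<And>b. b < K \<Longrightarrow> q b > 0" and total: "(\<Sum>b<K. q b) = 1"
    and \<rho>: "\<And>i j i' j'. i < m \<Longrightarrow> j < n \<Longrightarrow> i' < m \<Longrightarrow> j' < n \<Longrightarrow>
      \<rho> (i, j) (i', j') = (\<Sum>b<K. v b i j * cnj (v b i' j'))"
  shows "is_decomp m n \<rho> K q (\<lambda>b i j. v b i j / complex_of_real (sqrt (q b)))"
  unfolding is_decomp_def
proof (intro conjI allI impI)
  fix b assume b: "b < K"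
  show "0 \<le> q b" using pos[OF b] by simp
  have "(\<Sum>i<m. \<Sum>j<n. (cmod (v b i j / complex_of_real (sqrt (q b))))\<^sup>2)
      = (\<Sum>i<m. \<Sum>j<n. (cmod (v b i j))\<^sup>2) / q b"
    using pos[OF b] by (simp add: norm_divide power_divide sum_divide_distrib)
  also have "\<dots> = 1" using pos[OF b] by (simp add: q[symmetric])
  finally show "unit_state m n (\<lambda>i j. v b i j / complex_of_real (sqrt (q b)))"
    unfolding unit_state_def .
next
  fix i j i' j' assume "i < m" "j < n" "i' < m" "j' < n"
  hence "\<rho> (i, j) (i', j') = (\<Sum>b<K. v b i j * cnj (v b i' j'))" by (rule \<rho>)
  also have "\<dots> = (\<Sum>b<K. complex_of_real (q b) * (v b i j / complex_of_real (sqrt (q b)))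
      * cnj (v b i' j' / complex_of_real (sqrt (q b))))"
  proof (rule sum.cong[OF refl])
    fix b assume "b \<in> {..<K}"
    hence "q b > 0" using pos by simp
    hence "complex_of_real (sqrt (q b)) * complex_of_real (sqrt (q b)) = complex_of_real (q b)"
      "complex_of_real (sqrt (q b)) \<noteq> 0"
      by (simp_all flip: of_real_mult)
    thus "v b i j * cnj (v b i' j') = complex_of_real (q b) * (v b i j / complex_of_real (sqrt (q b)))
        * cnj (v b i' j' / complex_of_real (sqrt (q b)))"
      by (simp add: field_simps)
  qed
  finally show "\<rho> (i, j) (i', j') = (\<Sum>b<K. complex_of_real (q b) * (v b i j / complex_of_real (sqrt (q b)))
      * cnj (v b i' j' / complex_of_real (sqrt (q b))))" .
qed (use total in simp)

lemma E2_mixed_eqI: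
  assumes "is_decomp m n \<rho> k p \<psi>s" "(\<Sum>l<k. p l * E2_pure m n (\<psi>s l)) = e"
    and lower: "\<And>k p \<psi>s l. is_decomp m n \<rho> k p \<psi>s \<Longrightarrow> l < k \<Longrightarrow> p l > 0 \<Longrightarrow> E2_pure m n (\<psi>s l) \<ge> e"
  shows "E2_mixed m n \<rho> = e"
  unfolding E2_mixed_def
proof (rule cInf_eq_minimum)
  show "e \<in> {\<Sum>l<k. p l * E2_pure m n (\<psi>s l) |k p \<psi>s. is_decomp m n \<rho> k p \<psi>s}"
    using assms(1,2) by blast
next
  fix s assume "s \<in> {\<Sum>l<k. p l * E2_pure m n (\<psi>s l) |k p \<psi>s. is_decomp m n \<rho> k p \<psi>s}"
  then obtain k p \<psi>s where s: "s = (\<Sum>l<k. p l * E2_pure m n (\<psi>s l))" and dec: "is_decomp m n \<rho> k p \<psi>s"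
    by blast
  have p: "p l \<ge> 0" if "l < k" for l using dec that unfolding is_decomp_def by blast
  have "p l * e \<le> p l * E2_pure m n (\<psi>s l)" if "l < k" for l
    using lower[OF dec that] p[OF that] by (cases "p l = 0") (auto intro: mult_left_mono)
  hence "(\<Sum>l<k. p l * e) \<le> s" unfolding s by (intro sum_mono) auto
  thus "e \<le> s" using dec unfolding is_decomp_def by (simp add: sum_distrib_right[symmetric])
qed

lemma qform_partial_transpose_decomp:
  assumes "is_decomp m n \<rho> k p \<psi>s"
  shows "qform ({..<m} \<times> {..<n}) (partial_transpose \<rho>) x
       = (\<Sum>l<k. complex_of_real (p l) * qform ({..<m} \<times> {..<n}) (partial_transpose (pure_state_op (\<psi>s l))) x)"
proof -
  let ?S = "{..<m} \<times> {..<n}"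
  have entry: "partial_transpose \<rho> u v
      = (\<Sum>l<k. complex_of_real (p l) * partial_transpose (pure_state_op (\<psi>s l)) u v)"
    if "u \<in> ?S" "v \<in> ?S" for u v
    using that assms unfolding is_decomp_def partial_transpose_def pure_state_op_def
    by (auto simp: mult.assoc split: prod.splits)
  have "qform ?S (partial_transpose \<rho>) x
      = (\<Sum>u\<in>?S. \<Sum>v\<in>?S. \<Sum>l<k. complex_of_real (p l)
           * (cnj (x u) * partial_transpose (pure_state_op (\<psi>s l)) u v * x v))"
    unfolding qform_def by (intro sum.cong refl) (simp add: entry sum_distrib_left sum_distrib_right mult_ac)
  also have "\<dots> = (\<Sum>l<k. complex_of_real (p l) * qform ?S (partial_transpose (pure_state_op (\<psi>s l))) x)"
    unfolding qform_def by (simp add: sum_distrib_left sum.swap[of _ "{..<k}"])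
  finally show ?thesis .
qed

lemma weighted_mean_sq_le:
  fixes p t :: "'a \<Rightarrow> real"
  assumes "\<And>l. l \<in> L \<Longrightarrow> p l \<ge> 0"
  shows "(\<Sum>l\<in>L. p l * t l)\<^sup>2 \<le> (\<Sum>l\<in>L. p l) * (\<Sum>l\<in>L. p l * (t l)\<^sup>2)"
proof -
  have "(\<Sum>l\<in>L. p l * t l) = (\<Sum>l\<in>L. sqrt (p l) * (sqrt (p l) * t l))"
    using assms by (intro sum.cong refl) (simp add: mult.assoc[symmetric])
  also have "(\<Sum>l\<in>L. sqrt (p l) * (sqrt (p l) * t l))\<^sup>2
      \<le> (\<Sum>l\<in>L. (sqrt (p l))\<^sup>2) * (\<Sum>l\<in>L. (sqrt (p l) * t l)\<^sup>2)"
    by (rule Cauchy_Schwarz_ineq_sum)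
  also have "\<dots> = (\<Sum>l\<in>L. p l) * (\<Sum>l\<in>L. p l * (t l)\<^sup>2)"
    using assms by (simp add: power_mult_distrib)
  finally show ?thesis .
qed

text \<open>If the witness form is at least \<open>-C \<surd>E\<^sub>2\<close> on pure states, Cauchy--Schwarz over a
  decomposition bounds its square on \<open>\<rho>\<close> by \<open>C\<^sup>2 \<Sum> p\<^sub>l E\<^sub>2(\<psi>\<^sub>l)\<close>.\<close>

lemma pt_witness_sq_le_decomp_value:
  assumes "m > 0" and dec: "is_decomp m n \<rho> k p \<psi>s"
    and neg: "Re (qform ({..<m} \<times> {..<n}) (partial_transpose \<rho>) x) < 0"
    and bound: "\<And>\<psi>. unit_state m n \<psi> \<Longrightarrow>
      - Re (qform ({..<m} \<times> {..<n}) (partial_transpose (pure_state_op \<psi>)) x) \<le> C * sqrt (E2_pure m n \<psi>)"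
  shows "(Re (qform ({..<m} \<times> {..<n}) (partial_transpose \<rho>) x))\<^sup>2
    \<le> C\<^sup>2 * (\<Sum>l<k. p l * E2_pure m n (\<psi>s l))"
proof -
  let ?S = "{..<m} \<times> {..<n}"
  define \<eta> where "\<eta> = - Re (qform ?S (partial_transpose \<rho>) x)"
  have p: "\<And>l. l < k \<Longrightarrow> p l \<ge> 0" and p1: "(\<Sum>l<k. p l) = 1"
    and unit: "\<And>l. l < k \<Longrightarrow> unit_state m n (\<psi>s l)"
    using dec unfolding is_decomp_def by blast+
  define t where "t l = sqrt (E2_pure m n (\<psi>s l))" for l
  have t2: "(t l)\<^sup>2 = E2_pure m n (\<psi>s l)" if "l < k" for l
    unfolding t_def using E2_pure_nonneg[OF \<open>m > 0\<close> unit[OF that]] by simp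
  have "\<eta> = (\<Sum>l<k. p l * - Re (qform ?S (partial_transpose (pure_state_op (\<psi>s l))) x))"
    unfolding \<eta>_def qform_partial_transpose_decomp[OF dec] by (simp add: Re_sum sum_negf)
  also have "\<dots> \<le> (\<Sum>l<k. p l * (C * t l))"
    using bound[OF unit] p unfolding t_def by (intro sum_mono mult_left_mono) auto
  finally have "\<eta> \<le> C * (\<Sum>l<k. p l * t l)" by (simp add: sum_distrib_left mult_ac)
  hence "\<eta>\<^sup>2 \<le> C\<^sup>2 * (\<Sum>l<k. p l * t l)\<^sup>2"
    using neg unfolding \<eta>_def by (metis neg_0_less_iff_less less_imp_le power_mono power_mult_distrib)
  also have "\<dots> \<le> C\<^sup>2 * (\<Sum>l<k. p l * E2_pure m n (\<psi>s l))"
    using weighted_mean_sq_le[of "{..<k}" p t] p p1 t2 by (intro mult_left_mono) auto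
  finally show ?thesis unfolding \<eta>_def by simp
qed

lemma E2_mixed_pos_of_pt_witness:
  assumes "m > 0" and dec: "is_decomp m n \<rho> k0 p0 \<psi>s0"
    and neg: "Re (qform ({..<m} \<times> {..<n}) (partial_transpose \<rho>) x) < 0"
    and bound: "\<And>\<psi>. unit_state m n \<psi> \<Longrightarrow>
      - Re (qform ({..<m} \<times> {..<n}) (partial_transpose (pure_state_op \<psi>)) x) \<le> C * sqrt (E2_pure m n \<psi>)"
  shows "E2_mixed m n \<rho> > 0"
proof -
  define r where "r = Re (qform ({..<m} \<times> {..<n}) (partial_transpose \<rho>) x)"
  have lower: "r\<^sup>2 \<le> C\<^sup>2 * s"
    if "s \<in> {\<Sum>l<k. p l * E2_pure m n (\<psi>s l) |k p \<psi>s. is_decomp m n \<rho> k p \<psi>s}" for s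
    using that pt_witness_sq_le_decomp_value[OF \<open>m > 0\<close> _ neg bound] unfolding r_def by blast
  have "r\<^sup>2 > 0" using neg unfolding r_def by simp
  moreover have "r\<^sup>2 \<le> C\<^sup>2 * (\<Sum>l<k0. p0 l * E2_pure m n (\<psi>s0 l))" using dec by (intro lower) blast
  ultimately have "C\<^sup>2 > 0" by (cases "C = 0") auto
  have "r\<^sup>2 / C\<^sup>2 \<le> E2_mixed m n \<rho>"
    unfolding E2_mixed_def
  proof (rule cInf_greatest)
    show "{\<Sum>l<k. p l * E2_pure m n (\<psi>s l) |k p \<psi>s. is_decomp m n \<rho> k p \<psi>s} \<noteq> {}" using dec by blast
  qed (use lower \<open>C\<^sup>2 > 0\<close> in \<open>simp add: divide_le_eq mult.commute\<close>)
  moreover have "r\<^sup>2 / C\<^sup>2 > 0" using \<open>r\<^sup>2 > 0\<close> \<open>C\<^sup>2 > 0\<close> by simp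
  ultimately show ?thesis by linarith
qed

section \<open>The example\<close>

lemma of_real_sqrt2_mult_self: "complex_of_real (sqrt 2) * complex_of_real (sqrt 2) = 2"
  by (metis of_real_mult of_real_numeral real_sqrt_mult_self abs_numeral)

lemma cnj_psi0 [simp]: "cnj (psi0 a0 a1 a2 i j) = psi0 a0 a1 a2 i j"
  unfolding psi0_def by simp

lemma cnj_psi1 [simp]: "cnj (psi1 b0 b1 b2 i j) = psi1 b0 b1 b2 i j"
  unfolding psi1_def by simp

lemma E2_pure_Phi_ex_A_BC:
  assumes "a0\<^sup>2 = b0\<^sup>2" "a0\<^sup>2 \<ge> 1/2" "a0\<^sup>2 + a1\<^sup>2 + a2\<^sup>2 = 1" "b0\<^sup>2 + b1\<^sup>2 + b2\<^sup>2 = 1"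
  shows "E2_pure 3 8 (A_BC 2 (Phi_ex a0 a1 a2 b0 b1 b2)) = 1 - a0\<^sup>2"
proof -
  define t where "t i = (if i = 0 then a0\<^sup>2 else if i = 1 then (a1\<^sup>2 + b1\<^sup>2) / 2 else (a2\<^sup>2 + b2\<^sup>2) / 2)"
    for i :: nat
  have a0b0: "complex_of_real a0 * complex_of_real a0 = complex_of_real b0 * complex_of_real b0"
    using assms(1) by (metis of_real_mult power2_eq_square)
  have "E2_pure 3 8 (A_BC 2 (Phi_ex a0 a1 a2 b0 b1 b2)) = 1 - t 0"
  proof (rule E2_pure_eq_of_diagonal)
    show "reduced_X 8 (A_BC 2 (Phi_ex a0 a1 a2 b0 b1 b2)) i k = (if i = k then complex_of_real (t i) else 0)"
      if "i < 3" "k < 3" for i k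
      using less_3_cases[OF that(1)] less_3_cases[OF that(2)]
      unfolding reduced_X_def A_BC_def Phi_ex_def psi0_def psi1_def sum_lessThan_8 t_def
      by (elim disjE; simp add: of_real_sqrt2_mult_self a0b0 power2_eq_square field_simps)
    show "0 \<le> t i \<and> t i \<le> t 0" if "i < 3" for i
      unfolding t_def using assms by (auto simp: add_nonneg_nonneg) (smt (verit) zero_le_power2)+
  qed simp
  thus ?thesis by (simp add: t_def)
qed

lemma E2_pure_psi0:
  assumes "a1 \<ge> 0" "a2 \<ge> 0" "a0 > a1" "a1 \<ge> a2"
  shows "E2_pure 3 4 (psi0 a0 a1 a2) = 1 - a0\<^sup>2"
proof -
  define t where "t i = (if i = 0 then a0\<^sup>2 else if i = 1 then a1\<^sup>2 else a2\<^sup>2)" for i :: nat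
  have "E2_pure 3 4 (psi0 a0 a1 a2) = 1 - t 0"
  proof (rule E2_pure_eq_of_diagonal)
    show "reduced_X 4 (psi0 a0 a1 a2) i k = (if i = k then complex_of_real (t i) else 0)"
      if "i < 3" "k < 3" for i k
      using less_3_cases[OF that(1)] less_3_cases[OF that(2)]
      unfolding reduced_X_def psi0_def sum_lessThan_4 t_def
      by (elim disjE; simp add: power2_eq_square)
    show "0 \<le> t i \<and> t i \<le> t 0" if "i < 3" for i
      unfolding t_def using assms by (auto intro!: power_mono)
  qed simp
  thus ?thesis by (simp add: t_def)
qed

lemma E2_pure_psi1:
  assumes "b1 \<ge> 0" "b2 \<ge> 0" "b0 > b1" "b1 \<ge> b2"
  shows "E2_pure 3 4 (psi1 b0 b1 b2) = 1 - b0\<^sup>2"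
proof -
  define t where "t i = (if i = 0 then b0\<^sup>2 else if i = 1 then b1\<^sup>2 else b2\<^sup>2)" for i :: nat
  have "E2_pure 3 4 (psi1 b0 b1 b2) = 1 - t 0"
  proof (rule E2_pure_eq_of_diagonal)
    show "reduced_X 4 (psi1 b0 b1 b2) i k = (if i = k then complex_of_real (t i) else 0)"
      if "i < 3" "k < 3" for i k
      using less_3_cases[OF that(1)] less_3_cases[OF that(2)]
      unfolding reduced_X_def psi1_def sum_lessThan_4 t_def
      by (elim disjE; simp add: power2_eq_square)
    show "0 \<le> t i \<and> t i \<le> t 0" if "i < 3" for i
      unfolding t_def using assms by (auto intro!: power_mono)
  qed simp
  thus ?thesis by (simp add: t_def)
qed

text \<open>Since \<open>b\<^sub>0 = a\<^sub>0\<close>, the \<open>|0\<rangle>\<^sub>A\<close> row of \<open>\<alpha>\<psi>\<^sub>0 + \<beta>\<psi>\<^sub>1\<close> contributes at most \<open>a\<^sub>0\<^sup>2\<close>, and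
  the other two rows, of total weight \<open>1 - a\<^sub>0\<^sup>2 \<le> a\<^sub>0\<^sup>2\<close>, act on the complementary coordinates.\<close>

lemma E2_pure_span_psi0_psi1_ge:
  assumes span: "\<And>i j. i < 3 \<Longrightarrow> j < 4 \<Longrightarrow> \<psi> i j = \<alpha> * psi0 a0 a1 a2 i j + \<beta> * psi1 a0 b1 b2 i j"
    and ab: "(cmod \<alpha>)\<^sup>2 + (cmod \<beta>)\<^sup>2 = 1"
    and "a0\<^sup>2 \<ge> 1/2" "a0\<^sup>2 + a1\<^sup>2 + a2\<^sup>2 = 1" "a0\<^sup>2 + b1\<^sup>2 + b2\<^sup>2 = 1"
  shows "E2_pure 3 4 \<psi> \<ge> 1 - a0\<^sup>2"
proof (rule E2_pure_ge)
  fix y :: "nat \<Rightarrow> complex"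
  let ?r1 = "(cmod \<alpha>)\<^sup>2 * a1\<^sup>2 + (cmod \<beta>)\<^sup>2 * b1\<^sup>2" and ?r2 = "(cmod \<beta>)\<^sup>2 * b2\<^sup>2 + (cmod \<alpha>)\<^sup>2 * a2\<^sup>2"
  let ?Y03 = "(cmod (y 0))\<^sup>2 + (cmod (y 3))\<^sup>2" and ?Y12 = "(cmod (y 1))\<^sup>2 + (cmod (y 2))\<^sup>2"
  have rows: "vnorm2 3 (mat_vec 4 \<psi> y) = (cmod (of_real a0 * (\<alpha> * y 0 + \<beta> * y 3)))\<^sup>2
     + (cmod (\<alpha> * of_real a1 * y 1 + \<beta> * of_real b1 * y 2))\<^sup>2
     + (cmod (\<beta> * of_real b2 * y 1 + \<alpha> * of_real a2 * y 2))\<^sup>2"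
    unfolding vnorm2_def mat_vec_def sum_lessThan_3 sum_lessThan_4
    by (simp add: span psi0_def psi1_def algebra_simps)
  have row0: "(cmod (of_real a0 * (\<alpha> * y 0 + \<beta> * y 3)))\<^sup>2 \<le> a0\<^sup>2 * ?Y03"
    using cmod_add_mult_sq_le[of \<alpha> "y 0" \<beta> "y 3"] ab
    by (simp add: norm_mult power_mult_distrib mult_left_mono)
  have row1: "(cmod (\<alpha> * of_real a1 * y 1 + \<beta> * of_real b1 * y 2))\<^sup>2 \<le> ?r1 * ?Y12"
    using cmod_add_mult_sq_le[of "\<alpha> * of_real a1" "y 1" "\<beta> * of_real b1" "y 2"]
    by (simp add: norm_mult power_mult_distrib)
  have row2: "(cmod (\<beta> * of_real b2 * y 1 + \<alpha> * of_real a2 * y 2))\<^sup>2 \<le> ?r2 * ?Y12"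
    using cmod_add_mult_sq_le[of "\<beta> * of_real b2" "y 1" "\<alpha> * of_real a2" "y 2"]
    by (simp add: norm_mult power_mult_distrib)
  have "?r1 + ?r2 = (cmod \<alpha>)\<^sup>2 * (a1\<^sup>2 + a2\<^sup>2) + (cmod \<beta>)\<^sup>2 * (b1\<^sup>2 + b2\<^sup>2)"
    by (simp add: algebra_simps)
  also have "\<dots> = ((cmod \<alpha>)\<^sup>2 + (cmod \<beta>)\<^sup>2) * (1 - a0\<^sup>2)"
  proof -
    have "a1\<^sup>2 + a2\<^sup>2 = 1 - a0\<^sup>2" "b1\<^sup>2 + b2\<^sup>2 = 1 - a0\<^sup>2" using assms(4,5) by linarith+
    thus ?thesis by (simp only: distrib_right)
  qed
  finally have "?r1 + ?r2 \<le> a0\<^sup>2" using ab assms(3) by simp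
  hence "(?r1 + ?r2) * ?Y12 \<le> a0\<^sup>2 * ?Y12" by (simp add: mult_right_mono)
  hence "vnorm2 3 (mat_vec 4 \<psi> y) \<le> a0\<^sup>2 * ?Y03 + a0\<^sup>2 * ?Y12"
    unfolding rows using row0 row1 row2 by (simp add: algebra_simps)
  thus "vnorm2 3 (mat_vec 4 \<psi> y) \<le> a0\<^sup>2 * vnorm2 4 y"
    unfolding vnorm2_def sum_lessThan_4 by (simp add: algebra_simps)
qed simp_all

lemma unit_state_span_psi0_psi1:
  assumes "unit_state 3 4 \<psi>"
    and "\<forall>i<3. \<forall>j<4. \<psi> i j = \<alpha> * psi0 a0 a1 a2 i j + \<beta> * psi1 b0 b1 b2 i j"
    and "a0\<^sup>2 + a1\<^sup>2 + a2\<^sup>2 = 1" "b0\<^sup>2 + b1\<^sup>2 + b2\<^sup>2 = 1"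
  shows "(cmod \<alpha>)\<^sup>2 + (cmod \<beta>)\<^sup>2 = 1"
proof -
  have "1 = (\<Sum>i<3. \<Sum>j<4. (cmod (\<alpha> * psi0 a0 a1 a2 i j + \<beta> * psi1 b0 b1 b2 i j))\<^sup>2)"
    using assms(1,2) unfolding unit_state_def by simp
  also have "\<dots> = (cmod \<alpha>)\<^sup>2 * (a0\<^sup>2 + a1\<^sup>2 + a2\<^sup>2) + (cmod \<beta>)\<^sup>2 * (b0\<^sup>2 + b1\<^sup>2 + b2\<^sup>2)"
    unfolding sum_lessThan_3 sum_lessThan_4 psi0_def psi1_def
    by (simp add: norm_mult power_mult_distrib algebra_simps)
  finally show ?thesis using assms(3,4) by simp
qed

lemma rho_AB_decomp_state_in_span:
  assumes dec: "is_decomp 3 4 (rho_AB 2 (Phi_ex a0 a1 a2 b0 b1 b2)) k p \<psi>s"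
    and l: "l < k" "p l > 0"
    and norm: "a0\<^sup>2 + a1\<^sup>2 + a2\<^sup>2 = 1" "b0\<^sup>2 + b1\<^sup>2 + b2\<^sup>2 = 1"
  shows "\<exists>\<alpha> \<beta>. (\<forall>i<3. \<forall>j<4. \<psi>s l i j = \<alpha> * psi0 a0 a1 a2 i j + \<beta> * psi1 b0 b1 b2 i j)
            \<and> (cmod \<alpha>)\<^sup>2 + (cmod \<beta>)\<^sup>2 = 1"
proof -
  define S where "S = {..<3::nat} \<times> {..<4::nat}"
  define f where "f l' = (\<lambda>(i, j). \<psi>s l' i j)" for l'
  define g where "g c = (\<lambda>(i, j). Phi_ex a0 a1 a2 b0 b1 b2 i j c)" for c
  define P0 where "P0 = (\<lambda>(i, j). psi0 a0 a1 a2 i j)"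
  define P1 where "P1 = (\<lambda>(i, j). psi1 b0 b1 b2 i j)"
  have p: "\<And>l. l < k \<Longrightarrow> p l \<ge> 0" and unit: "unit_state 3 4 (\<psi>s l)"
    using dec l unfolding is_decomp_def by blast+
  have eq: "(\<Sum>l<k. complex_of_real (p l) * f l u * cnj (f l v)) = (\<Sum>c<2. g c u * cnj (g c v))"
    if "u \<in> S" "v \<in> S" for u v
    using that dec unfolding S_def f_def g_def rho_AB_def is_decomp_def by auto
  have orthonormal: "cinner S P0 P0 = 1" "cinner S P1 P1 = 1" "cinner S P0 P1 = 0"
    unfolding cinner_def S_def sum_lessThan_times sum_lessThan_3 sum_lessThan_4 P0_def P1_def
      psi0_def psi1_def
    using norm by (simp_all flip: of_real_mult of_real_add add: power2_eq_square)
  have g: "g 0 = (\<lambda>u. complex_of_real (1 / sqrt 2) * P0 u)" "g 1 = (\<lambda>u. complex_of_real (1 / sqrt 2) * P1 u)"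
    unfolding g_def P0_def P1_def Phi_ex_def by auto
  have span: "\<forall>u\<in>S. f l u = cinner S P0 (f l) * P0 u + cinner S P1 (f l) * P1 u"
  proof (rule eq_on_span_of_orthonormal[OF _ orthonormal])
    fix w assume w: "cinner S w P0 = 0" "cinner S w P1 = 0"
    have orth: "cinner S w (g c) = 0" if "c < 2" for c
    proof -
      have "c = 0 \<or> c = 1" using that by auto
      thus ?thesis using w by (elim disjE) (simp_all only: g cinner_mult_right mult_zero_right)
    qed
    show "cinner S w (f l) = 0"
      by (rule cinner_eq_0_of_decomp[where S = S and f = f and g = g and k = k and p = p and r = 2])
        (simp_all add: eq p l orth)
  qed (simp add: S_def)
  define \<alpha> where "\<alpha> = cinner S P0 (f l)"
  define \<beta> where "\<beta> = cinner S P1 (f l)"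
  have coeffs: "\<forall>i<3. \<forall>j<4. \<psi>s l i j = \<alpha> * psi0 a0 a1 a2 i j + \<beta> * psi1 b0 b1 b2 i j"
    using span unfolding S_def f_def P0_def P1_def \<alpha>_def \<beta>_def by auto
  with unit_state_span_psi0_psi1[OF unit _ norm] show ?thesis by blast
qed

lemma E2_mixed_rho_AB:
  assumes "a1 \<ge> 0" "a2 \<ge> 0" "b1 \<ge> 0" "b2 \<ge> 0" "a0 > a1" "a1 \<ge> a2" "a0 > b1" "b1 \<ge> b2"
    and "a0\<^sup>2 \<ge> 1/2" "a0\<^sup>2 + a1\<^sup>2 + a2\<^sup>2 = 1" "a0\<^sup>2 + b1\<^sup>2 + b2\<^sup>2 = 1"
  shows "E2_mixed 3 4 (rho_AB 2 (Phi_ex a0 a1 a2 a0 b1 b2)) = 1 - a0\<^sup>2"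
proof (rule E2_mixed_eqI)
  define ps where "ps l = (if l = 0 then psi0 a0 a1 a2 else psi1 a0 b1 b2)" for l :: nat
  show "is_decomp 3 4 (rho_AB 2 (Phi_ex a0 a1 a2 a0 b1 b2)) 2 (\<lambda>_. 1/2) ps"
    unfolding is_decomp_def
  proof (intro conjI allI impI)
    fix l :: nat assume "l < 2"
    thus "0 \<le> (1/2 :: real)" "unit_state 3 4 (ps l)"
      using assms(10,11) unfolding unit_state_def ps_def sum_lessThan_3 sum_lessThan_4 psi0_def psi1_def
      by (auto simp: less_2_cases_iff)
  next
    fix i j i' j'
    show "rho_AB 2 (Phi_ex a0 a1 a2 a0 b1 b2) (i, j) (i', j')
        = (\<Sum>l<2. complex_of_real (1/2) * ps l i j * cnj (ps l i' j'))"
      unfolding rho_AB_def Phi_ex_def sum_lessThan_2 ps_def by (simp add: of_real_sqrt2_mult_self field_simps)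
  qed simp
  show "(\<Sum>l<2. 1/2 * E2_pure 3 4 (ps l)) = 1 - a0\<^sup>2"
    using E2_pure_psi0[OF assms(1,2,5,6)] E2_pure_psi1[OF assms(3,4,7,8)]
    unfolding sum_lessThan_2 ps_def by simp
next
  fix k p \<psi>s l
  assume dec: "is_decomp 3 4 (rho_AB 2 (Phi_ex a0 a1 a2 a0 b1 b2)) k p \<psi>s" and "l < k" "p l > 0"
  then obtain \<alpha> \<beta> where "\<forall>i<3. \<forall>j<4. \<psi>s l i j = \<alpha> * psi0 a0 a1 a2 i j + \<beta> * psi1 a0 b1 b2 i j"
      and "(cmod \<alpha>)\<^sup>2 + (cmod \<beta>)\<^sup>2 = 1"
    using rho_AB_decomp_state_in_span assms(10,11) by blast
  thus "1 - a0\<^sup>2 \<le> E2_pure 3 4 (\<psi>s l)"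
    using E2_pure_span_psi0_psi1_ge assms(9-11) by blast
qed

definition block_vec :: "real \<Rightarrow> real \<Rightarrow> real \<Rightarrow> real \<Rightarrow> nat \<times> nat \<Rightarrow> complex" where
  "block_vec a b c d = (\<lambda>(i, j). complex_of_real
     (if i = 1 \<and> j = 0 then a else if i = 1 \<and> j = 1 then b
      else if i = 2 \<and> j = 0 then c else if i = 2 \<and> j = 1 then d else 0))"

text \<open>For a pure state the form equals \<open>|A\<^sub>0\<^sub>0|\<^sup>2 + |A\<^sub>1\<^sub>1|\<^sup>2 + 2 Re(A\<^sub>0\<^sub>1 A\<^sub>1\<^sub>0\<^sup>*)\<close> for the
  matrix \<open>A = X\<^sup>T \<Psi>\<close>, where \<open>X\<close> and \<open>\<Psi>\<close> are rows 1, 2 of the witness and of the state;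
  so it is controlled by \<open>det A = det X \<cdot> minor12 \<psi>\<close>.\<close>

lemma Re_qform_pt_pure_block_vec_ge:
  "Re (qform ({..<3} \<times> {..<2}) (partial_transpose (pure_state_op \<psi>)) (block_vec a b c d))
    \<ge> - (2 * \<bar>a * d - b * c\<bar>) * cmod (minor12 \<psi>)"
proof -
  define A00 where "A00 = of_real a * \<psi> 1 0 + of_real c * \<psi> 2 0"
  define A01 where "A01 = of_real a * \<psi> 1 1 + of_real c * \<psi> 2 1"
  define A10 where "A10 = of_real b * \<psi> 1 0 + of_real d * \<psi> 2 0"
  define A11 where "A11 = of_real b * \<psi> 1 1 + of_real d * \<psi> 2 1"
  have form: "qform ({..<3} \<times> {..<2}) (partial_transpose (pure_state_op \<psi>)) (block_vec a b c d)
      = A00 * cnj A00 + A11 * cnj A11 + A01 * cnj A10 + A10 * cnj A01"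
    unfolding qform_def sum_lessThan_times sum_lessThan_3 sum_lessThan_2 block_vec_def
      partial_transpose_def pure_state_op_def A00_def A01_def A10_def A11_def
    by (simp add: algebra_simps)
  have "A00 * A11 - A01 * A10 = complex_of_real (a * d - b * c) * minor12 \<psi>"
    unfolding A00_def A01_def A10_def A11_def minor12_def by (simp add: algebra_simps)
  hence "cmod (A00 * A11 - A01 * A10) = \<bar>a * d - b * c\<bar> * cmod (minor12 \<psi>)"
    by (simp only: norm_mult norm_of_real)
  thus ?thesis unfolding form using Re_det2_form_ge[of A00 A11 A01 A10] by linarith
qed

lemma qform_pt_rho_AC_block_vec:
  "qform ({..<3} \<times> {..<2}) (partial_transpose (rho_AC 4 (Phi_ex a0 a1 a2 b0 b1 b2))) (block_vec a b c d)
    = complex_of_real ((a1\<^sup>2 * a\<^sup>2 + 2 * a2 * b1 * a * d + b2\<^sup>2 * d\<^sup>2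
        + a2\<^sup>2 * c\<^sup>2 + 2 * a1 * b2 * c * b + b1\<^sup>2 * b\<^sup>2) / 2)"
  unfolding qform_def sum_lessThan_times sum_lessThan_3 sum_lessThan_2 sum_lessThan_4 block_vec_def
    partial_transpose_def rho_AC_def Phi_ex_def psi0_def psi1_def
  by (simp add: of_real_sqrt2_mult_self field_simps power2_eq_square)

text \<open>The form above is the sum of a binary quadratic form in \<open>(a, d)\<close> of determinant
  \<open>D = a\<^sub>1\<^sup>2 b\<^sub>2\<^sup>2 - a\<^sub>2\<^sup>2 b\<^sub>1\<^sup>2\<close> and one in \<open>(c, b)\<close> of determinant \<open>-D\<close>. The witness uses the
  directions \<open>(a\<^sub>2 b\<^sub>1, -a\<^sub>1\<^sup>2)\<close> and \<open>(b\<^sub>1\<^sup>2, -a\<^sub>1 b\<^sub>2)\<close>, on which the two forms are multiples of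
  \<open>D\<close> and \<open>-D\<close>, scaled so that the total is \<open>-a\<^sub>1\<^sup>2 b\<^sub>1\<^sup>2 D\<^sup>2 / 2\<close> whatever the sign of \<open>D\<close>.\<close>

lemma qform_pt_rho_AC_witness:
  fixes a0 a1 a2 b0 b1 b2 :: real
  defines "D \<equiv> a1\<^sup>2 * b2\<^sup>2 - a2\<^sup>2 * b1\<^sup>2"
  shows "qform ({..<3} \<times> {..<2}) (partial_transpose (rho_AC 4 (Phi_ex a0 a1 a2 b0 b1 b2)))
      (block_vec (a2\<^sup>2 * b1 ^ 3) (- (a1 ^ 3 * b2\<^sup>2)) (a1\<^sup>2 * b1\<^sup>2 * b2) (- (a1\<^sup>2 * a2 * b1\<^sup>2)))
    = complex_of_real (- (a1\<^sup>2 * b1\<^sup>2 * D\<^sup>2 / 2))"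
  unfolding qform_pt_rho_AC_block_vec D_def by (rule arg_cong[where f = complex_of_real]) algebra

lemma rho_AC_decomp_exists:
  assumes "a0 > 0" "a1 > 0" "b0 > 0" "b1 > 0"
    and "a0\<^sup>2 + a1\<^sup>2 + a2\<^sup>2 = 1" "b0\<^sup>2 + b1\<^sup>2 + b2\<^sup>2 = 1"
  shows "\<exists>k p \<psi>s. is_decomp 3 2 (rho_AC 4 (Phi_ex a0 a1 a2 b0 b1 b2)) k p \<psi>s"
proof -
  define v where "v b i j = Phi_ex a0 a1 a2 b0 b1 b2 i b j" for b i j
  define q where "q b = (\<Sum>i<3. \<Sum>j<2. (cmod (v b i j))\<^sup>2)" for b
  have q: "q b = (if b = 0 then a0\<^sup>2 / 2 else if b = 1 then (a1\<^sup>2 + b2\<^sup>2) / 2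
      else if b = 2 then (a2\<^sup>2 + b1\<^sup>2) / 2 else b0\<^sup>2 / 2)" if "b < 4" for b
  proof -
    have "b = 0 \<or> b = 1 \<or> b = 2 \<or> b = 3" using that by auto
    thus ?thesis unfolding q_def v_def sum_lessThan_3 sum_lessThan_2 Phi_ex_def psi0_def psi1_def
      by (elim disjE; simp add: norm_divide power_divide)
  qed
  have "is_decomp 3 2 (rho_AC 4 (Phi_ex a0 a1 a2 b0 b1 b2)) 4 q (\<lambda>b i j. v b i j / complex_of_real (sqrt (q b)))"
  proof (rule is_decomp_normalize[OF q_def])
    show "q b > 0" if "b < 4" for b using q[OF that] assms by (auto simp: add_pos_nonneg add_nonneg_pos)
    show "(\<Sum>b<4. q b) = 1" unfolding sum_lessThan_4 using q assms(5,6) by (simp add: field_simps)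
  qed (simp add: rho_AC_def v_def)
  thus ?thesis by blast
qed

lemma witness_coefficients_nondegenerate:
  fixes a1 a2 b1 b2 :: real
  assumes "a2 \<ge> 0" "b2 \<ge> 0" "a1 \<ge> a2" "b1 \<ge> b2" "b1 * a2 \<noteq> a1 * b2"
  shows "a1 > 0" "b1 > 0" "a1\<^sup>2 * b2\<^sup>2 - a2\<^sup>2 * b1\<^sup>2 \<noteq> 0"
proof -
  show "a1 > 0"
  proof (rule ccontr)
    assume "\<not> a1 > 0"
    hence "a1 = 0" "a2 = 0" using assms(1,3) by linarith+
    thus False using assms(5) by simp
  qed
  show "b1 > 0"
  proof (rule ccontr)
    assume "\<not> b1 > 0"
    hence "b1 = 0" "b2 = 0" using assms(2,4) by linarith+
    thus False using assms(5) by simp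
  qed
  have "a1 * b2 + a2 * b1 \<noteq> 0"
  proof
    assume "a1 * b2 + a2 * b1 = 0"
    moreover have "a1 * b2 \<ge> 0" "a2 * b1 \<ge> 0" using assms(1-4) by simp_all
    ultimately have "a1 * b2 = 0" "a2 * b1 = 0" by linarith+
    thus False using assms(5) by (metis mult.commute)
  qed
  moreover have "a1 * b2 - a2 * b1 \<noteq> 0" using assms(5) by (simp add: mult.commute)
  moreover have "a1\<^sup>2 * b2\<^sup>2 - a2\<^sup>2 * b1\<^sup>2 = (a1 * b2 - a2 * b1) * (a1 * b2 + a2 * b1)"
    by (simp add: algebra_simps power2_eq_square)
  ultimately show "a1\<^sup>2 * b2\<^sup>2 - a2\<^sup>2 * b1\<^sup>2 \<noteq> 0" by simp
qed

lemma rho_AC_npt_and_E2_pos: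
  assumes "a0 > 0" "a2 \<ge> 0" "b2 \<ge> 0" "a1 \<ge> a2" "b1 \<ge> b2" "b1 * a2 \<noteq> a1 * b2"
    and "a0\<^sup>2 + a1\<^sup>2 + a2\<^sup>2 = 1" "a0\<^sup>2 + b1\<^sup>2 + b2\<^sup>2 = 1"
  shows "\<not> psd_bip 3 2 (partial_transpose (rho_AC 4 (Phi_ex a0 a1 a2 a0 b1 b2)))
       \<and> E2_mixed 3 2 (rho_AC 4 (Phi_ex a0 a1 a2 a0 b1 b2)) > 0"
proof -
  let ?\<rho> = "rho_AC 4 (Phi_ex a0 a1 a2 a0 b1 b2)"
  define wa wb wc wd
    where "wa = a2\<^sup>2 * b1 ^ 3" and "wb = - (a1 ^ 3 * b2\<^sup>2)"
      and "wc = a1\<^sup>2 * b1\<^sup>2 * b2" and "wd = - (a1\<^sup>2 * a2 * b1\<^sup>2)"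
  let ?x = "block_vec wa wb wc wd"
  note nondeg = witness_coefficients_nondegenerate[OF assms(2-6)]
  have neg: "Re (qform ({..<3} \<times> {..<2}) (partial_transpose ?\<rho>) ?x) < 0"
    unfolding wa_def wb_def wc_def wd_def qform_pt_rho_AC_witness using nondeg by simp
  hence "\<not> psd_bip 3 2 (partial_transpose ?\<rho>)" unfolding psd_bip_iff_qform using not_le by blast
  moreover obtain k p \<psi>s where dec: "is_decomp 3 2 ?\<rho> k p \<psi>s"
    using rho_AC_decomp_exists[of a0 a1 a0 b1 a2 b2] assms nondeg by blast
  have "E2_mixed 3 2 ?\<rho> > 0"
  proof (rule E2_mixed_pos_of_pt_witness[OF _ dec neg])
    fix \<psi> assume "unit_state 3 2 \<psi>"
    hence "cmod (minor12 \<psi>) \<le> sqrt (E2_pure 3 2 \<psi>)"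
      using E2_pure_ge_minor12 by (simp add: real_le_rsqrt)
    hence "2 * \<bar>wa * wd - wb * wc\<bar> * cmod (minor12 \<psi>) \<le> 2 * \<bar>wa * wd - wb * wc\<bar> * sqrt (E2_pure 3 2 \<psi>)"
      by (simp add: mult_left_mono)
    moreover have "- Re (qform ({..<3} \<times> {..<2}) (partial_transpose (pure_state_op \<psi>)) ?x)
        \<le> 2 * \<bar>wa * wd - wb * wc\<bar> * cmod (minor12 \<psi>)"
      using Re_qform_pt_pure_block_vec_ge[where \<psi> = \<psi> and a = wa and b = wb and c = wc and d = wd]
      by simp
    ultimately show "- Re (qform ({..<3} \<times> {..<2}) (partial_transpose (pure_state_op \<psi>)) ?x)
        \<le> 2 * \<bar>wa * wd - wb * wc\<bar> * sqrt (E2_pure 3 2 \<psi>)"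
      by linarith
  qed simp
  ultimately show ?thesis by blast
qed

theorem theorem1:
  fixes a0 a1 a2 b0 b1 b2 :: real
  assumes "a0 \<ge> 0" "a1 \<ge> 0" "a2 \<ge> 0" "b0 \<ge> 0" "b1 \<ge> 0" "b2 \<ge> 0"
    and "a0\<^sup>2 = b0\<^sup>2" "a0\<^sup>2 \<ge> 1/2"
    and "a0 > a1" "a1 \<ge> a2" "b0 > b1" "b1 \<ge> b2"
    and "a0\<^sup>2 + a1\<^sup>2 + a2\<^sup>2 = 1" "b0\<^sup>2 + b1\<^sup>2 + b2\<^sup>2 = 1"
    and "b1 * a2 \<noteq> a1 * b2"
  shows "E2_pure 3 8 (A_BC 2 (Phi_ex a0 a1 a2 b0 b1 b2)) = 1 - a0\<^sup>2
       \<and> E2_mixed 3 4 (rho_AB 2 (Phi_ex a0 a1 a2 b0 b1 b2)) = 1 - a0\<^sup>2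
       \<and> E2_mixed 3 2 (rho_AC 4 (Phi_ex a0 a1 a2 b0 b1 b2)) > 0
       \<and> \<not> psd_bip 3 2 (partial_transpose (rho_AC 4 (Phi_ex a0 a1 a2 b0 b1 b2)))"
proof -
  have b0: "b0 = a0" using assms(1,4,7) by (metis power2_eq_iff_nonneg)
  have "a0 > 0" using assms(2,9) by linarith
  have "E2_mixed 3 4 (rho_AB 2 (Phi_ex a0 a1 a2 a0 b1 b2)) = 1 - a0\<^sup>2"
    by (rule E2_mixed_rho_AB) (use assms b0 in auto)
  moreover have "\<not> psd_bip 3 2 (partial_transpose (rho_AC 4 (Phi_ex a0 a1 a2 a0 b1 b2)))
      \<and> E2_mixed 3 2 (rho_AC 4 (Phi_ex a0 a1 a2 a0 b1 b2)) > 0"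
    by (rule rho_AC_npt_and_E2_pos) (use assms b0 \<open>a0 > 0\<close> in auto)
  ultimately show ?thesis using E2_pure_Phi_ex_A_BC[OF assms(7,8,13,14)] b0 by simp
qed

end
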